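(* Let $C_1 = [0,1] \setminus \left(\frac{1}{3}, \frac{2}{3}\right)$ and for $i \geq 2$ let $C_i = \frac{1}{3} C_{i-1} \cup \left(\frac{2}{3} + \frac{1}{3} C_{i-1}\right)$. Then $M_{C_i} = (0,1)$ for all integers $i \geq 1$.
   Context: For a set $A \subset \mathbb{R}$, the midpoint set of $A$ is $M_A := \left\{\frac{x+y}{2} : x, y \in A,\ x \neq y\right\}$. For $c \in \mathbb{R}$ and $A \subset \mathbb{R}$, $cA = \{ca : a \in A\}$ and $c + A = \{c + a : a \in A\}$. *)

theory Defs
  imports "HOL-Analysis.Analysis"
begin

definition midpoint_set :: "real set \<Rightarrow> real set" where
  "midpoint_set A = {(x + y) / 2 | x y. x \<in> A \<and> y \<in> A \<and> x \<noteq> y}"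

text \<open>C 1 = [0,1] minus (1/3,2/3); C i = (1/3) C (i-1) union (2/3 + (1/3) C (i-1)) for i >= 2.
  The value at index 0 is irrelevant (set to the empty set).\<close>
fun cantorC :: "nat \<Rightarrow> real set" where
  "cantorC 0 = {}"
| "cantorC (Suc 0) = {0..1} - {1/3<..<2/3}"
| "cantorC (Suc (Suc n)) =
     ((\<lambda>a. (1/3) * a) ` cantorC (Suc n)) \<union> ((\<lambda>a. 2/3 + a) ` ((\<lambda>a. (1/3) * a) ` cantorC (Suc n)))"

end

theory Submission
  imports Defs
begin

text \<open>
  Write \<open>T A = A/3 \<union> (2/3 + A/3)\<close>, so that \<open>C\<^sub>1 = T [0,1]\<close> and \<open>C\<^sub>i\<^sub>+\<^sub>1 = T C\<^sub>i\<close>.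
  The property "\<open>A \<subseteq> [0,1]\<close>, \<open>0, 1 \<in> A\<close> and \<open>(0,1) \<subseteq> M\<^sub>A\<close>" holds for \<open>[0,1]\<close> and is
  preserved by \<open>T\<close>. Midpoint sets commute with affine maps, so the two halves of
  \<open>T A\<close> produce all midpoints in \<open>(0,1/3)\<close> and \<open>(2/3,1)\<close>. For \<open>m \<in> [1/3,2/3]\<close>
  write \<open>6m - 2 = x + y\<close> with \<open>x, y \<in> A\<close> (possible since \<open>0, 1 \<in> A\<close> and
  \<open>(0,1) \<subseteq> M\<^sub>A\<close>); then \<open>m\<close> is the midpoint of \<open>x/3\<close> and \<open>2/3 + y/3\<close>, which lie in
  different halves and so are distinct.
\<close>

definition cantor_step :: "real set \<Rightarrow> real set" where
  "cantor_step A = ((\<lambda>a. (1/3) * a) ` A) \<union> ((\<lambda>a. 2/3 + a) ` ((\<lambda>a. (1/3) * a) ` A))"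

lemma cantorC_Suc_0: "cantorC (Suc 0) = cantor_step {0..1}"
  by (auto simp: cantor_step_def image_iff intro: bexI[of _ "3 * _"] bexI[of _ "3 * _ - 2"])

lemma cantorC_Suc_Suc: "cantorC (Suc (Suc n)) = cantor_step (cantorC (Suc n))"
  by (simp add: cantor_step_def)

lemma midpoint_set_mono: "A \<subseteq> B \<Longrightarrow> midpoint_set A \<subseteq> midpoint_set B"
  unfolding midpoint_set_def by blast

lemma midpoint_set_image:
  assumes "inj f" and f: "\<And>x y. f ((x + y) / 2) = (f x + f y) / 2"
  shows "midpoint_set (f ` A) = f ` midpoint_set A"
proof
  show "midpoint_set (f ` A) \<subseteq> f ` midpoint_set A"
  proof
    fix m assume "m \<in> midpoint_set (f ` A)"
    then obtain x y where "x \<in> A" "y \<in> A" "f x \<noteq> f y" "m = (f x + f y) / 2"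
      unfolding midpoint_set_def by auto
    then show "m \<in> f ` midpoint_set A"
      unfolding midpoint_set_def f[symmetric] by blast
  qed
  show "f ` midpoint_set A \<subseteq> midpoint_set (f ` A)"
  proof
    fix m assume "m \<in> f ` midpoint_set A"
    then obtain x y where xy: "x \<in> A" "y \<in> A" "x \<noteq> y" "m = f ((x + y) / 2)"
      unfolding midpoint_set_def by blast
    have "f x \<noteq> f y" using \<open>inj f\<close> \<open>x \<noteq> y\<close> by (simp add: inj_eq)
    moreover have "m = (f x + f y) / 2" using xy(4) by (simp add: f)
    ultimately show "m \<in> midpoint_set (f ` A)"
      unfolding midpoint_set_def using xy(1,2) by blast
  qed
qed

lemma midpoint_set_subset_interval:
  assumes "A \<subseteq> {a..b}"
  shows "midpoint_set A \<subseteq> {a<..<b}"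
proof
  fix m assume "m \<in> midpoint_set A"
  then obtain x y where "x \<in> A" "y \<in> A" "x \<noteq> y" "m = (x + y) / 2"
    unfolding midpoint_set_def by blast
  moreover have "x \<in> {a..b}" "y \<in> {a..b}" using calculation assms by auto
  ultimately show "m \<in> {a<..<b}" by auto
qed

lemma midpoint_set_interval: "{a<..<b} \<subseteq> midpoint_set {a..b}"
proof
  fix m assume m: "m \<in> {a<..<b}"
  define d where "d = min (m - a) (b - m)"
  have "d > 0" using m by (simp add: d_def)
  moreover have "m - d \<in> {a..b}" "m + d \<in> {a..b}" using m by (auto simp: d_def)
  ultimately show "m \<in> midpoint_set {a..b}"
    unfolding midpoint_set_def by (intro CollectI exI[of _ "m - d"] exI[of _ "m + d"]) auto
qed

lemma sum_in_double_of_midpoints: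
  fixes A :: "real set"
  assumes "0 \<in> A" "1 \<in> A" "{0<..<1} \<subseteq> midpoint_set A" "0 \<le> s" "s \<le> 2"
  obtains x y where "x \<in> A" "y \<in> A" "x + y = s"
proof (cases "s = 0 \<or> s = 2")
  case True
  then show ?thesis using that assms(1,2) by fastforce
next
  case False
  then have "s / 2 \<in> midpoint_set A" using assms(3-5) by auto
  then show ?thesis using that unfolding midpoint_set_def by auto
qed

lemma cantor_step_subset: "A \<subseteq> {0..1} \<Longrightarrow> cantor_step A \<subseteq> {0..1}"
  unfolding cantor_step_def by auto

lemma cantor_step_endpoints: "0 \<in> A \<Longrightarrow> 1 \<in> A \<Longrightarrow> 0 \<in> cantor_step A \<and> 1 \<in> cantor_step A"
  unfolding cantor_step_def by (auto simp: image_iff intro: bexI[of _ 1])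

lemma midpoint_set_cantor_step:
  assumes sub: "A \<subseteq> {0..1}" and ends: "0 \<in> A" "1 \<in> A"
    and mid: "{0<..<1} \<subseteq> midpoint_set A"
  shows "{0<..<1} \<subseteq> midpoint_set (cantor_step A)"
proof
  fix m :: real assume m: "m \<in> {0<..<1}"
  let ?third = "\<lambda>a::real. (1/3) * a" and ?shift = "\<lambda>a::real. 2/3 + a"
  have third: "midpoint_set (?third ` B) = ?third ` midpoint_set B" for B
    by (rule midpoint_set_image) (auto simp: inj_on_def)
  have shift: "midpoint_set (?shift ` B) = ?shift ` midpoint_set B" for B
    by (rule midpoint_set_image) (auto simp: inj_on_def field_simps)
  have left: "midpoint_set (?third ` A) \<subseteq> midpoint_set (cantor_step A)"
   and right: "midpoint_set (?shift ` ?third ` A) \<subseteq> midpoint_set (cantor_step A)"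
    by (auto intro!: midpoint_set_mono simp: cantor_step_def)
  consider "m < 1/3" | "1/3 \<le> m" "m \<le> 2/3" | "2/3 < m" by linarith
  then show "m \<in> midpoint_set (cantor_step A)"
  proof cases
    case 1
    then have "3 * m \<in> midpoint_set A" using m mid by auto
    then have "m \<in> ?third ` midpoint_set A" by (rule rev_image_eqI) simp
    then show ?thesis using left third by blast
  next
    case 2
    then obtain x y where xy: "x \<in> A" "y \<in> A" "x + y = 6 * m - 2"
      using sum_in_double_of_midpoints[OF ends mid, of "6 * m - 2"] by auto
    have "(1/3) * x \<le> 1/3" "2/3 \<le> 2/3 + (1/3) * y" using xy sub by auto
    moreover have "(1/3) * x \<in> cantor_step A" "2/3 + (1/3) * y \<in> cantor_step A"
      using xy unfolding cantor_step_def by auto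
    ultimately show ?thesis unfolding midpoint_set_def using xy
      by (intro CollectI exI[of _ "(1/3) * x"] exI[of _ "2/3 + (1/3) * y"]) auto
  next
    case 3
    then have "3 * m - 2 \<in> midpoint_set A" using m mid by auto
    then have "m \<in> ?shift ` ?third ` midpoint_set A"
      by (rule rev_image_eqI[OF imageI]) (simp add: field_simps)
    then show ?thesis using right third shift by blast
  qed
qed

lemma cantorC_invariant:
  "cantorC (Suc n) \<subseteq> {0..1} \<and> 0 \<in> cantorC (Suc n) \<and> 1 \<in> cantorC (Suc n)
    \<and> {0<..<1} \<subseteq> midpoint_set (cantorC (Suc n))"
proof (induction n)
  case 0
  have "{0<..<1} \<subseteq> midpoint_set {0..1::real}" by (rule midpoint_set_interval)
  then show ?case unfolding cantorC_Suc_0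
    using cantor_step_subset cantor_step_endpoints midpoint_set_cantor_step by auto
next
  case (Suc n)
  then show ?case unfolding cantorC_Suc_Suc
    using cantor_step_subset cantor_step_endpoints midpoint_set_cantor_step by blast
qed

theorem theorem2p6:
  fixes i :: nat
  assumes "i \<ge> 1"
  shows "midpoint_set (cantorC i) = {0<..<1}"
proof -
  obtain n where i: "i = Suc n" using assms by (cases i) auto
  show ?thesis
    using cantorC_invariant[of n] midpoint_set_subset_interval[of "cantorC i" 0 1]
    unfolding i by blast
qed

end
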